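(* Let $n$ be an even integer and let $x$ be an integer with $6 \leq x \leq n-4$. Let $d$ be the sequence of length $n$ $$d = (n-1,\, n-1,\, n-1,\, \underbrace{x, \ldots, x}_{n-6},\, 3,\, 3,\, 3).$$ Then $d$ is a $3$-factorable graphic sequence, and no realization of $d$ has a connected $3$-factor.
   Context: A finite sequence of nonnegative integers $d = (d_1, \ldots, d_n)$ is graphic if there is a simple graph on vertices $v_1, \ldots, v_n$ with $\deg(v_i) = d_i$ for all $i$; such a graph is a realization of $d$. A $k$-factor of a graph $G$ is a spanning subgraph of $G$ in which every vertex has degree $k$. A graphic sequence $d$ is $k$-factorable if some realization of $d$ contains a $k$-factor. A connected $k$-factor is a $k$-factor that is a connected graph. *)

theory Defs
  imports Main
begin

text \<open>Simple graphs on the vertex set {0..<n}, with v_{i+1} represented by i.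
  A graph is given by its edge set: a set of 2-element subsets of {0..<n}.\<close>

definition simple_graph :: "nat \<Rightarrow> nat set set \<Rightarrow> bool" where
  "simple_graph n E \<longleftrightarrow> (\<forall>e\<in>E. \<exists>u v. u \<noteq> v \<and> u < n \<and> v < n \<and> e = {u, v})"

definition deg :: "nat set set \<Rightarrow> nat \<Rightarrow> nat" where
  "deg E v = card {e\<in>E. v \<in> e}"

definition realization :: "nat list \<Rightarrow> nat set set \<Rightarrow> bool" where
  "realization d E \<longleftrightarrow> simple_graph (length d) E \<and> (\<forall>i < length d. deg E i = d ! i)"

definition graphic :: "nat list \<Rightarrow> bool" where
  "graphic d \<longleftrightarrow> (\<exists>E. realization d E)"

definition k_factor :: "nat \<Rightarrow> nat \<Rightarrow> nat set set \<Rightarrow> nat set set \<Rightarrow> bool" where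
  "k_factor k n E F \<longleftrightarrow> F \<subseteq> E \<and> (\<forall>v < n. deg F v = k)"

definition k_factorable :: "nat \<Rightarrow> nat list \<Rightarrow> bool" where
  "k_factorable k d \<longleftrightarrow> graphic d \<and> (\<exists>E F. realization d E \<and> k_factor k (length d) E F)"

definition connected_graph :: "nat \<Rightarrow> nat set set \<Rightarrow> bool" where
  "connected_graph n F \<longleftrightarrow>
     (\<forall>u < n. \<forall>v < n. (u, v) \<in> {(a, b). {a, b} \<in> F}\<^sup>*)"

definition connected_k_factor :: "nat \<Rightarrow> nat \<Rightarrow> nat set set \<Rightarrow> nat set set \<Rightarrow> bool" where
  "connected_k_factor k n E F \<longleftrightarrow> k_factor k n E F \<and> connected_graph n F"

end

theory Submission
  imports Defs
begin

text \<open>The first three vertices have degree n - 1, so they are adjacent to every vertex, and the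
  last three have degree 3, so their only neighbours are these three hubs. A 3-factor must
  therefore contain all nine hub-leaf edges, which saturate the hubs: hubs and leaves form a
  K(3,3) component of the factor, and as n \<ge> 10 there are vertices outside it.

  For the realization, join the hubs to all vertices and put an (x - 3)-regular circulant graph
  on the n - 6 middle vertices. That circulant contains a 3-factor: the circulant with distances
  \<plusminus>1 and (n - 6)/2 if x - 3 is odd, and otherwise the one with distances \<plusminus>2 together with
  the matching {2i, 2i + 1}. Adding the hub-leaf K(3,3) gives a 3-factor of the whole graph.\<close>

section \<open>Hubs and leaves\<close>

lemma simple_graph_finite:
  assumes "simple_graph n E"
  shows "finite E"
proof -
  have "E \<subseteq> Pow {..<n}"
    using assms unfolding simple_graph_def by fastforce
  then show ?thesis
    using finite_subset by blast
qed

lemma card_doubletons: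
  assumes "v \<notin> U"
  shows "card ((\<lambda>u. {v, u}) ` U) = card U"
proof -
  have "inj_on (\<lambda>u. {v, u}) U"
    using assms by (auto simp: inj_on_def doubleton_eq_iff)
  then show ?thesis
    by (rule card_image)
qed

lemma incident_edges_eq_if_card:
  assumes "finite E" and "S \<subseteq> {e\<in>E. v \<in> e}" and "card S = deg E v"
  shows "{e\<in>E. v \<in> e} = S"
  using card_subset_eq[of "{e\<in>E. v \<in> e}" S] assms unfolding deg_def by simp

lemma full_degree_adjacent:
  assumes sg: "simple_graph n E" and v: "v < n" "deg E v = n - 1" and u: "u < n" "u \<noteq> v"
  shows "{v, u} \<in> E"
proof -
  let ?star = "(\<lambda>u. {v, u}) ` ({..<n} - {v})"
  have "{e\<in>E. v \<in> e} \<subseteq> ?star"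
  proof
    fix e
    assume e: "e \<in> {e\<in>E. v \<in> e}"
    then obtain a b where "a \<noteq> b" "a < n" "b < n" "e = {a, b}"
      using sg unfolding simple_graph_def by blast
    with e show "e \<in> ?star"
      by (auto simp: insert_commute)
  qed
  moreover have "card ?star = deg E v"
    using v by (simp add: card_doubletons)
  ultimately have "{e\<in>E. v \<in> e} = ?star"
    using card_subset_eq[of ?star] unfolding deg_def by simp
  with u show ?thesis
    by blast
qed

lemma reachable_stays_in_closed_set:
  assumes "(a, b) \<in> {(a, b). {a, b} \<in> F}\<^sup>*" and "a \<in> S"
    and "\<And>u w. {u, w} \<in> F \<Longrightarrow> u \<in> S \<Longrightarrow> w \<in> S"
  shows "b \<in> S"
  using assms(1,2) by induction (use assms(3) in auto)

context
  fixes n k :: nat and E F :: "nat set set" and H L :: "nat set"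
  assumes simple: "simple_graph n E" and factor: "k_factor k n E F"
    and hubs_leaves: "H \<subseteq> {..<n}" "L \<subseteq> {..<n}" "H \<inter> L = {}" "card H = k" "card L = k"
    and deg_hub: "\<And>h. h \<in> H \<Longrightarrow> deg E h = n - 1"
    and deg_leaf: "\<And>w. w \<in> L \<Longrightarrow> deg E w = k"
begin

lemma factor_edges_at_leaf:
  assumes w: "w \<in> L"
  shows "{e\<in>F. w \<in> e} = (\<lambda>h. {w, h}) ` H"
proof -
  have FE: "F \<subseteq> E" and "deg F w = k"
    using factor w hubs_leaves unfolding k_factor_def by auto
  have "{h, w} \<in> E" if "h \<in> H" for h
    using full_degree_adjacent[OF simple] deg_hub that w hubs_leaves by blast
  then have "(\<lambda>h. {w, h}) ` H \<subseteq> {e\<in>E. w \<in> e}"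
    by (auto simp: insert_commute)
  moreover have card_star: "card ((\<lambda>h. {w, h}) ` H) = k"
    using w hubs_leaves by (subst card_doubletons) auto
  ultimately have "{e\<in>E. w \<in> e} = (\<lambda>h. {w, h}) ` H"
    using incident_edges_eq_if_card[OF simple_graph_finite[OF simple]] deg_leaf[OF w] by metis
  then have "{e\<in>F. w \<in> e} \<subseteq> (\<lambda>h. {w, h}) ` H"
    using FE by blast
  moreover have "finite H"
    using hubs_leaves finite_subset by blast
  ultimately show ?thesis
    using card_subset_eq[of "(\<lambda>h. {w, h}) ` H"] card_star \<open>deg F w = k\<close>
    unfolding deg_def by simp
qed

lemma factor_edges_at_hub:
  assumes h: "h \<in> H"
  shows "{e\<in>F. h \<in> e} = (\<lambda>w. {h, w}) ` L"
proof (rule incident_edges_eq_if_card)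
  show "finite F"
    using factor simple_graph_finite[OF simple] finite_subset unfolding k_factor_def by blast
  show "(\<lambda>w. {h, w}) ` L \<subseteq> {e\<in>F. h \<in> e}"
    using factor_edges_at_leaf h by (fastforce simp: insert_commute)
  show "card ((\<lambda>w. {h, w}) ` L) = deg F h"
    using h hubs_leaves factor unfolding k_factor_def by (subst card_doubletons) auto
qed

lemma factor_edge_closed:
  assumes uw: "{u, w} \<in> F" and u: "u \<in> H \<union> L"
  shows "w \<in> H \<union> L"
proof -
  have uw_at_u: "{u, w} \<in> {e\<in>F. u \<in> e}"
    using uw by simp
  consider "u \<in> H" | "u \<in> L"
    using u by blast
  then show ?thesis
  proof cases
    case 1
    with uw_at_u have "{u, w} \<in> (\<lambda>w. {u, w}) ` L"
      by (simp only: factor_edges_at_hub)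
    then show ?thesis
      by (auto simp: doubleton_eq_iff)
  next
    case 2
    with uw_at_u have "{u, w} \<in> (\<lambda>h. {u, h}) ` H"
      by (simp only: factor_edges_at_leaf)
    then show ?thesis
      by (auto simp: doubleton_eq_iff)
  qed
qed

lemma not_connected_factor_if_hubs_and_leaves:
  assumes "0 < k" and "v < n" "v \<notin> H \<union> L"
  shows "\<not> connected_graph n F"
proof
  assume "connected_graph n F"
  obtain h where h: "h \<in> H"
    using hubs_leaves(4) \<open>0 < k\<close> by fastforce
  then have "(h, v) \<in> {(a, b). {a, b} \<in> F}\<^sup>*"
    using \<open>connected_graph n F\<close> hubs_leaves(1) \<open>v < n\<close> unfolding connected_graph_def by blast
  then have "v \<in> H \<union> L"
    using h factor_edge_closed reachable_stays_in_closed_set[of h v F "H \<union> L"] by blast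
  with \<open>v \<notin> H \<union> L\<close> show False
    by blast
qed

end

section \<open>Graphs given by adjacency relations\<close>

definition edge_set :: "(nat \<Rightarrow> nat \<Rightarrow> bool) \<Rightarrow> nat set set" where
  "edge_set R = {{a, b} | a b. R a b}"

definition adjacency_on :: "nat \<Rightarrow> (nat \<Rightarrow> nat \<Rightarrow> bool) \<Rightarrow> bool" where
  "adjacency_on n R \<longleftrightarrow> (\<forall>a b. R a b \<longrightarrow> R b a \<and> a \<noteq> b \<and> a < n \<and> b < n)"

definition regular_adjacency :: "nat \<Rightarrow> nat \<Rightarrow> (nat \<Rightarrow> nat \<Rightarrow> bool) \<Rightarrow> bool" where
  "regular_adjacency n k R \<longleftrightarrow> adjacency_on n R \<and> (\<forall>a < n. card {b. R a b} = k)"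

lemma finite_neighbors_adjacency_on:
  assumes "adjacency_on m R"
  shows "finite {b. R a b}"
  using assms unfolding adjacency_on_def by (auto intro: finite_subset[of _ "{..<m}"])

lemma card_neighbors_regular_adjacency:
  assumes "regular_adjacency m k R"
  shows "card {b. R a b} = (if a < m then k else 0)"
proof -
  have "{b. R a b} = {}" if "\<not> a < m"
    using assms that unfolding regular_adjacency_def adjacency_on_def by auto
  with assms show ?thesis
    unfolding regular_adjacency_def by auto
qed

lemma simple_graph_edge_set:
  assumes "adjacency_on n R"
  shows "simple_graph n (edge_set R)"
  using assms unfolding simple_graph_def edge_set_def adjacency_on_def by blast

lemma deg_edge_set:
  assumes "adjacency_on n R"
  shows "deg (edge_set R) v = card {u. R v u}"
proof -
  have "{e \<in> edge_set R. v \<in> e} = (\<lambda>u. {v, u}) ` {u. R v u}"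
    using assms unfolding edge_set_def adjacency_on_def by (auto simp: insert_commute)
  moreover have "inj_on (\<lambda>u. {v, u}) {u. R v u}"
    using assms unfolding adjacency_on_def by (auto simp: inj_on_def doubleton_eq_iff)
  ultimately show ?thesis
    unfolding deg_def by (simp add: card_image)
qed

lemma edge_set_mono: "R \<le> S \<Longrightarrow> edge_set R \<subseteq> edge_set S"
  unfolding edge_set_def by blast

lemma regular_adjacency_disjoint_union:
  assumes R: "regular_adjacency n k R" and S: "regular_adjacency n l S"
    and disjoint: "\<And>a b. R a b \<Longrightarrow> \<not> S a b"
  shows "regular_adjacency n (k + l) (\<lambda>a b. R a b \<or> S a b)"
proof -
  have "card {b. R a b \<or> S a b} = k + l" if "a < n" for a
  proof -
    have "{b. R a b \<or> S a b} = {b. R a b} \<union> {b. S a b}"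
      by blast
    moreover have "finite {b. R a b}" "finite {b. S a b}"
      using R S finite_neighbors_adjacency_on unfolding regular_adjacency_def by blast+
    moreover have "{b. R a b} \<inter> {b. S a b} = {}"
      using disjoint by blast
    ultimately show ?thesis
      using R S that unfolding regular_adjacency_def by (simp add: card_Un_disjoint)
  qed
  with R S show ?thesis
    unfolding regular_adjacency_def adjacency_on_def by blast
qed

section \<open>Circulant graphs\<close>

definition circulant :: "nat \<Rightarrow> nat set \<Rightarrow> nat \<Rightarrow> nat \<Rightarrow> bool" where
  "circulant m D i j \<longleftrightarrow> i < m \<and> (\<exists>\<delta>\<in>D. j = (i + \<delta>) mod m)"

lemma add_mod_eq_if:
  fixes i \<delta> m :: nat
  assumes "i < m" "\<delta> < m"
  shows "(i + \<delta>) mod m = (if i + \<delta> < m then i + \<delta> else i + \<delta> - m)"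
  using assms by (simp add: mod_if le_mod_geq)

lemma regular_adjacency_circulant:
  assumes D: "D \<subseteq> {1..<m}" and sym: "\<And>\<delta>. \<delta> \<in> D \<Longrightarrow> m - \<delta> \<in> D"
  shows "regular_adjacency m (card D) (circulant m D)"
proof -
  have adj: "circulant m D j i \<and> i \<noteq> j \<and> j < m" if ij: "circulant m D i j" for i j
  proof -
    obtain \<delta> where i: "i < m" and \<delta>: "\<delta> \<in> D" and j: "j = (i + \<delta>) mod m"
      using ij unfolding circulant_def by blast
    have "1 \<le> \<delta>" "\<delta> < m"
      using \<delta> D by auto
    have "i = (j + (m - \<delta>)) mod m"
      using i \<open>1 \<le> \<delta>\<close> \<open>\<delta> < m\<close> j by (simp add: add_mod_eq_if)
    with \<delta> sym have "circulant m D j i"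
      using i j unfolding circulant_def by auto
    moreover have "i \<noteq> j" "j < m"
      using i \<open>1 \<le> \<delta>\<close> \<open>\<delta> < m\<close> j by (auto simp: add_mod_eq_if)
    ultimately show ?thesis
      by blast
  qed
  have "card {j. circulant m D i j} = card D" if i: "i < m" for i
  proof -
    have "{j. circulant m D i j} = (\<lambda>\<delta>. (i + \<delta>) mod m) ` D"
      using i unfolding circulant_def by auto
    moreover have "inj_on (\<lambda>\<delta>. (i + \<delta>) mod m) D"
    proof (rule inj_onI)
      fix a b
      assume "a \<in> D" "b \<in> D" "(i + a) mod m = (i + b) mod m"
      moreover from D have "a < m" "b < m"
        using calculation(1,2) by auto
      ultimately show "a = b"
        using i by (simp add: add_mod_eq_if split: if_splits)
    qed
    ultimately show ?thesis
      by (simp add: card_image)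
  qed
  with adj show ?thesis
    unfolding regular_adjacency_def adjacency_on_def circulant_def by blast
qed

lemma circulant_mono: "D \<subseteq> D' \<Longrightarrow> circulant m D \<le> circulant m D'"
  unfolding circulant_def by auto

definition circulant_distances :: "nat \<Rightarrow> nat \<Rightarrow> nat set" where
  "circulant_distances m k =
     {1..k div 2} \<union> {m - k div 2..<m} \<union> (if odd k then {m div 2} else {})"

lemma circulant_distances:
  assumes "even m" "k < m"
  shows "circulant_distances m k \<subseteq> {1..<m}"
    and "\<And>\<delta>. \<delta> \<in> circulant_distances m k \<Longrightarrow> m - \<delta> \<in> circulant_distances m k"
    and "card (circulant_distances m k) = k"
proof -
  let ?h = "k div 2"
  have h: "2 * ?h < m"
    using assms by auto
  then show "circulant_distances m k \<subseteq> {1..<m}"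
    using assms unfolding circulant_distances_def by auto
  show "m - \<delta> \<in> circulant_distances m k" if "\<delta> \<in> circulant_distances m k" for \<delta>
    using that h assms(1) unfolding circulant_distances_def by (auto split: if_splits)
  have "card ({1..?h} \<union> {m - ?h..<m}) = 2 * ?h"
    using h by (subst card_Un_disjoint) auto
  moreover have "m div 2 \<notin> {1..?h} \<union> {m - ?h..<m}" if "odd k"
    using h that assms by auto
  ultimately show "card (circulant_distances m k) = k"
    unfolding circulant_distances_def by simp
qed

definition pairing :: "nat \<Rightarrow> nat \<Rightarrow> nat \<Rightarrow> bool" where
  "pairing m i j \<longleftrightarrow> i < m \<and> j < m \<and> i \<noteq> j \<and> i div 2 = j div 2"

lemma pairing_iff: "pairing m i j \<longleftrightarrow> i < m \<and> j < m \<and> (j = i + 1 \<and> even i \<or> i = j + 1 \<and> even j)"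
  unfolding pairing_def by presburger

lemma regular_adjacency_pairing:
  assumes "even m"
  shows "regular_adjacency m 1 (pairing m)"
proof -
  have "{j. pairing m i j} = {if even i then i + 1 else i - 1}" if "i < m" for i
    using assms that unfolding pairing_iff by auto presburger+
  then show ?thesis
    unfolding regular_adjacency_def adjacency_on_def pairing_def by auto
qed

lemma pairing_le_circulant:
  assumes "{1, m - 1} \<subseteq> D"
  shows "pairing m \<le> circulant m D"
proof (intro le_funI le_boolI)
  fix i j
  assume ij: "pairing m i j"
  then have "i < m" "j < m"
    unfolding pairing_def by auto
  moreover have "j = (i + 1) mod m \<or> j = (i + (m - 1)) mod m"
    using ij add_mod_eq_if[of i m 1] add_mod_eq_if[of i m "m - 1"]
    unfolding pairing_iff by auto
  ultimately show "circulant m D i j"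
    using assms unfolding circulant_def by blast
qed

lemma pairing_disjoint_circulant:
  assumes "6 \<le> m" "pairing m i j"
  shows "\<not> circulant m {2, m - 2} i j"
proof
  assume "circulant m {2, m - 2} i j"
  then obtain \<delta> where "i < m" "\<delta> \<in> {2, m - 2}" "j = (i + \<delta>) mod m"
    unfolding circulant_def by blast
  moreover have "\<delta> < m"
    using calculation(2) assms(1) by auto
  ultimately have "j = (if i + \<delta> < m then i + \<delta> else i + \<delta> - m)"
    using add_mod_eq_if by blast
  with \<open>\<delta> \<in> {2, m - 2}\<close> assms show False
    unfolding pairing_iff by (auto split: if_splits)
qed

lemma circulant_distances_3_factor_odd:
  assumes m: "even m" and k: "odd k" "3 \<le> k" "k < m"
  defines "D \<equiv> {1, m - 1, m div 2}"
  shows "regular_adjacency m 3 (circulant m D)"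
    and "circulant m D \<le> circulant m (circulant_distances m k)"
proof -
  have "4 \<le> m"
    using m k by presburger
  then have "1 < m div 2" "m div 2 < m - 1" "m - m div 2 = m div 2"
    using m by auto
  then have "D \<subseteq> {1..<m}" "\<And>\<delta>. \<delta> \<in> D \<Longrightarrow> m - \<delta> \<in> D" "card D = 3"
    and "D \<subseteq> circulant_distances m k"
    using k unfolding D_def circulant_distances_def by auto
  then show "regular_adjacency m 3 (circulant m D)"
    and "circulant m D \<le> circulant m (circulant_distances m k)"
    using regular_adjacency_circulant circulant_mono by metis+
qed

lemma circulant_distances_3_factor_even:
  assumes m: "even m" and k: "even k" "3 \<le> k" "k < m"
  defines "F \<equiv> \<lambda>i j. circulant m {2, m - 2} i j \<or> pairing m i j"
  shows "regular_adjacency m 3 F"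
    and "F \<le> circulant m (circulant_distances m k)"
proof -
  have "6 \<le> m" "2 \<le> k div 2"
    using m k by presburger+
  then have "{2, m - 2} \<subseteq> {1..<m}" "\<And>\<delta>. \<delta> \<in> {2, m - 2} \<Longrightarrow> m - \<delta> \<in> {2, m - 2}"
    "card {2, m - 2} = 2" and D2: "{2, m - 2} \<subseteq> circulant_distances m k"
    and D1: "{1, m - 1} \<subseteq> circulant_distances m k"
    unfolding circulant_distances_def by auto
  then have "regular_adjacency m 2 (circulant m {2, m - 2})"
    using regular_adjacency_circulant by metis
  then have "regular_adjacency m (2 + 1) F"
    unfolding F_def using regular_adjacency_disjoint_union regular_adjacency_pairing[OF m]
      pairing_disjoint_circulant[OF \<open>6 \<le> m\<close>] by blast
  then show "regular_adjacency m 3 F"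
    by simp
  show "F \<le> circulant m (circulant_distances m k)"
    unfolding F_def using circulant_mono[OF D2] pairing_le_circulant[OF D1]
    by (auto simp: le_fun_def)
qed

lemma regular_adjacency_with_3_factor:
  assumes "even m" "3 \<le> k" "k < m"
  shows "\<exists>G F. regular_adjacency m k G \<and> regular_adjacency m 3 F \<and> F \<le> G"
proof -
  have "regular_adjacency m k (circulant m (circulant_distances m k))"
    using regular_adjacency_circulant circulant_distances[OF assms(1,3)] by metis
  then show ?thesis
    using circulant_distances_3_factor_odd[OF assms(1) _ assms(2,3)]
      circulant_distances_3_factor_even[OF assms(1) _ assms(2,3)] by blast
qed

section \<open>Attaching hubs and leaves\<close>

definition shift_rel :: "nat \<Rightarrow> (nat \<Rightarrow> nat \<Rightarrow> bool) \<Rightarrow> nat \<Rightarrow> nat \<Rightarrow> bool" where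
  "shift_rel s R a b \<longleftrightarrow> s \<le> a \<and> s \<le> b \<and> R (a - s) (b - s)"

lemma neighbors_shift_rel:
  "{b. shift_rel s R a b} = (if s \<le> a then (\<lambda>j. j + s) ` {j. R (a - s) j} else {})"
  unfolding shift_rel_def by (auto simp: image_iff) (metis le_add_diff_inverse2)

lemma card_Un_shifted:
  fixes s :: nat
  assumes "A \<subseteq> {..<s}" "finite B"
  shows "card (A \<union> (\<lambda>j. j + s) ` B) = card A + card B"
proof -
  have "A \<inter> (\<lambda>j. j + s) ` B = {}"
    using assms(1) by fastforce
  moreover have "finite A"
    using assms(1) finite_subset by blast
  ultimately show ?thesis
    using assms(2) by (simp add: card_Un_disjoint card_image)
qed

text \<open>Vertices 0, 1, 2 are the hubs and n - 3, n - 2, n - 1 the leaves; the graph G, resp. the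
  factor F, lives on the middle vertices 3, ..., n - 4, shifted by 3.\<close>

definition hub_extension :: "nat \<Rightarrow> (nat \<Rightarrow> nat \<Rightarrow> bool) \<Rightarrow> nat \<Rightarrow> nat \<Rightarrow> bool" where
  "hub_extension n G a b \<longleftrightarrow> (a \<noteq> b \<and> a < n \<and> b < n \<and> (a < 3 \<or> b < 3)) \<or> shift_rel 3 G a b"

definition hub_leaf_extension :: "nat \<Rightarrow> (nat \<Rightarrow> nat \<Rightarrow> bool) \<Rightarrow> nat \<Rightarrow> nat \<Rightarrow> bool" where
  "hub_leaf_extension n F a b \<longleftrightarrow>
     (a < 3 \<and> n - 3 \<le> b \<and> b < n) \<or> (b < 3 \<and> n - 3 \<le> a \<and> a < n) \<or> shift_rel 3 F a b"

lemma adjacency_on_hub_extension: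
  assumes "adjacency_on (n - 6) G"
  shows "adjacency_on n (hub_extension n G)"
  using assms unfolding adjacency_on_def hub_extension_def shift_rel_def by (auto; fastforce)

lemma adjacency_on_hub_leaf_extension:
  assumes "6 \<le> n" "adjacency_on (n - 6) F"
  shows "adjacency_on n (hub_leaf_extension n F)"
  using assms unfolding adjacency_on_def hub_leaf_extension_def shift_rel_def by (auto; fastforce)

lemma hub_leaf_extension_le_hub_extension:
  assumes "6 \<le> n" "F \<le> G"
  shows "hub_leaf_extension n F \<le> hub_extension n G"
  using assms unfolding hub_leaf_extension_def hub_extension_def shift_rel_def
  by (auto simp: le_fun_def)

lemma card_neighbors_hub_extension:
  assumes n: "6 \<le> n" and G: "regular_adjacency (n - 6) k G" and v: "v < n"
  shows "card {u. hub_extension n G v u} = (if v < 3 then n - 1 else if v < n - 3 then k + 3 else 3)"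
proof (cases "v < 3")
  case True
  then have "{u. hub_extension n G v u} = {..<n} - {v}"
    using v unfolding hub_extension_def shift_rel_def by auto
  with True v show ?thesis
    by simp
next
  case False
  then have "{u. hub_extension n G v u} = {..<3} \<union> {u. shift_rel 3 G v u}"
    using n v unfolding hub_extension_def shift_rel_def by auto
  also have "\<dots> = {..<3} \<union> (\<lambda>j. j + 3) ` {j. G (v - 3) j}"
    using False by (simp add: neighbors_shift_rel)
  moreover have "finite {j. G (v - 3) j}"
    using G finite_neighbors_adjacency_on unfolding regular_adjacency_def by blast
  ultimately have "card {u. hub_extension n G v u} = 3 + card {j. G (v - 3) j}"
    using card_Un_shifted[of "{..<3}" 3] by simp
  with False n show ?thesis
    using card_neighbors_regular_adjacency[OF G] by auto
qed

lemma card_neighbors_hub_leaf_extension: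
  assumes n: "6 \<le> n" and F: "regular_adjacency (n - 6) 3 F" and v: "v < n"
  shows "card {u. hub_leaf_extension n F v u} = 3"
proof (cases "v < 3")
  case True
  then have "{u. hub_leaf_extension n F v u} = {n - 3..<n}"
    using n v unfolding hub_leaf_extension_def shift_rel_def by auto
  with n show ?thesis
    by simp
next
  case False
  let ?leaf_hubs = "if n - 3 \<le> v then {..<3::nat} else {}"
  from False have "{u. hub_leaf_extension n F v u} = ?leaf_hubs \<union> {u. shift_rel 3 F v u}"
    using n v unfolding hub_leaf_extension_def shift_rel_def by auto
  also have "\<dots> = ?leaf_hubs \<union> (\<lambda>j. j + 3) ` {j. F (v - 3) j}"
    using False by (simp add: neighbors_shift_rel)
  moreover have "finite {j. F (v - 3) j}"
    using F finite_neighbors_adjacency_on unfolding regular_adjacency_def by blast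
  ultimately have "card {u. hub_leaf_extension n F v u} = card ?leaf_hubs + card {j. F (v - 3) j}"
    using card_Un_shifted[of ?leaf_hubs 3] by simp
  with False n show ?thesis
    using card_neighbors_regular_adjacency[OF F] by auto
qed

lemma hubs_middle_leaves_with_3_factor:
  fixes n x :: nat
  assumes "even n" "6 \<le> x" "x + 4 \<le> n"
  shows "\<exists>E F. simple_graph n E
    \<and> (\<forall>v < n. deg E v = (if v < 3 then n - 1 else if v < n - 3 then x else 3))
    \<and> k_factor 3 n E F"
proof -
  have n: "6 \<le> n" and "even (n - 6)" "3 \<le> x - 3" "x - 3 < n - 6"
    using assms by auto
  then obtain G F where G: "regular_adjacency (n - 6) (x - 3) G"
    and F: "regular_adjacency (n - 6) 3 F" and "F \<le> G"
    using regular_adjacency_with_3_factor by blast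
  let ?E = "hub_extension n G" and ?F = "hub_leaf_extension n F"
  have adj: "adjacency_on n ?E" "adjacency_on n ?F"
    using G F n adjacency_on_hub_extension adjacency_on_hub_leaf_extension
    unfolding regular_adjacency_def by blast+
  have "simple_graph n (edge_set ?E)"
    using adj(1) by (rule simple_graph_edge_set)
  moreover have "\<forall>v < n. deg (edge_set ?E) v = (if v < 3 then n - 1 else if v < n - 3 then x else 3)"
    using deg_edge_set[OF adj(1)] card_neighbors_hub_extension[OF n G] assms by simp
  moreover have "k_factor 3 n (edge_set ?E) (edge_set ?F)"
    unfolding k_factor_def
    using edge_set_mono[OF hub_leaf_extension_le_hub_extension[OF n \<open>F \<le> G\<close>]]
      deg_edge_set[OF adj(2)] card_neighbors_hub_leaf_extension[OF n F] by simp
  ultimately show ?thesis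
    by blast
qed

theorem claim1:
  fixes n x :: nat
  assumes "even n" and "6 \<le> x" and "x + 4 \<le> n"
  defines "d \<equiv> replicate 3 (n - 1) @ replicate (n - 6) x @ replicate 3 3"
  shows "graphic d \<and> k_factorable 3 d \<and>
         (\<forall>E. realization d E \<longrightarrow> \<not> (\<exists>F. connected_k_factor 3 n E F))"
proof -
  have n: "10 \<le> n"
    using assms by simp
  have len: "length d = n"
    unfolding d_def using n by simp
  have nth_d: "d ! i = (if i < 3 then n - 1 else if i < n - 3 then x else 3)" if "i < n" for i
    unfolding d_def using n that by (auto simp: nth_append)
  obtain E F where "simple_graph n E" "\<forall>v < n. deg E v = d ! v" and F: "k_factor 3 n E F"
    using hubs_middle_leaves_with_3_factor[OF assms(1-3)] nth_d by auto
  then have "realization d E"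
    unfolding realization_def using len by simp
  then have "graphic d" "k_factorable 3 d"
    unfolding graphic_def k_factorable_def using len F by blast+
  moreover have "\<not> connected_k_factor 3 n E' F'" if "realization d E'" for E' F'
  proof -
    have "simple_graph n E'" "\<forall>v < n. deg E' v = d ! v"
      using that len unfolding realization_def by auto
    moreover have "{n - 3..<n} \<subseteq> {..<n}" "{..<3} \<inter> {n - 3..<n} = {}" "3 \<notin> {..<3} \<union> {n - 3..<n}"
      using n by auto
    ultimately show ?thesis
      using not_connected_factor_if_hubs_and_leaves[where H = "{..<3}" and L = "{n - 3..<n}"
          and k = 3 and v = 3] nth_d n
      unfolding connected_k_factor_def by auto
  qed
  ultimately show ?thesis
    by blast
qed

end
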